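(* Let $H$ be a selfadjoint operator on a separable Hilbert space $\mathcal H$ with spectral family $\{E_\lambda\}_{\lambda\in\mathbb R}$. Let $f,g\in\mathcal H$ and $\lambda\in\mathbb R$, and suppose $\mu\mapsto\langle E_\mu f|g\rangle$ is differentiable at $\lambda$. Then for every $\chi\in C_0^\infty(\mathbb R)$ the function $\mu\mapsto\langle E_\mu\chi(H)f|g\rangle$ is differentiable at $\lambda$ and $$\frac{d\langle E_\lambda\chi(H)f|g\rangle}{d\lambda}=\chi(\lambda)\frac{d\langle E_\lambda f|g\rangle}{d\lambda}.$$
   Context: Here $C_0^\infty(\mathbb R)$ denotes the set of infinitely differentiable complex-valued functions on $\mathbb R$ such that the function and all its derivatives tend to zero at infinity. Inner products are linear in the first argument. *)

theory Defs
  imports "HOL-Analysis.Analysis"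
begin

text \<open>Model of a separable complex Hilbert space: l2(I) for an index set I of naturals
  (every separable Hilbert space is unitarily equivalent to one of these).
  Inner product is linear in the first argument.\<close>

type_synonym vec = "nat \<Rightarrow> complex"

definition l2 :: "nat set \<Rightarrow> vec set" where
  "l2 I = {x. (\<forall>n. n \<notin> I \<longrightarrow> x n = 0) \<and> summable (\<lambda>n. (cmod (x n))\<^sup>2)}"

definition ip :: "vec \<Rightarrow> vec \<Rightarrow> complex" where
  "ip x y = (\<Sum>n. x n * cnj (y n))"

definition vnorm :: "vec \<Rightarrow> real" where
  "vnorm x = sqrt (\<Sum>n. (cmod (x n))\<^sup>2)"

definition lincomb :: "complex \<Rightarrow> vec \<Rightarrow> complex \<Rightarrow> vec \<Rightarrow> vec" where
  "lincomb a x b y = (\<lambda>n. a * x n + b * y n)"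

definition bounded_op :: "nat set \<Rightarrow> (vec \<Rightarrow> vec) \<Rightarrow> bool" where
  "bounded_op I T \<longleftrightarrow>
     (\<forall>x\<in>l2 I. T x \<in> l2 I) \<and>
     (\<forall>x\<in>l2 I. \<forall>y\<in>l2 I. \<forall>a b. T (lincomb a x b y) = lincomb a (T x) b (T y)) \<and>
     (\<exists>C. \<forall>x\<in>l2 I. vnorm (T x) \<le> C * vnorm x)"

definition orth_proj :: "nat set \<Rightarrow> (vec \<Rightarrow> vec) \<Rightarrow> bool" where
  "orth_proj I P \<longleftrightarrow> bounded_op I P \<and>
     (\<forall>x\<in>l2 I. P (P x) = P x) \<and>
     (\<forall>x\<in>l2 I. \<forall>y\<in>l2 I. ip (P x) y = ip x (P y))"

definition spectral_family :: "nat set \<Rightarrow> (real \<Rightarrow> vec \<Rightarrow> vec) \<Rightarrow> bool" where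
  "spectral_family I E \<longleftrightarrow>
     (\<forall>t. orth_proj I (E t)) \<and>
     (\<forall>s t. \<forall>x\<in>l2 I. E s (E t x) = E (min s t) x) \<and>
     (\<forall>t. \<forall>x\<in>l2 I. ((\<lambda>s. vnorm (\<lambda>n. E s x n - E t x n)) \<longlongrightarrow> 0) (at_right t)) \<and>
     (\<forall>x\<in>l2 I. ((\<lambda>s. vnorm (E s x)) \<longlongrightarrow> 0) at_bot) \<and>
     (\<forall>x\<in>l2 I. ((\<lambda>s. vnorm (\<lambda>n. E s x n - x n)) \<longlongrightarrow> 0) at_top)"

definition spec_meas :: "(real \<Rightarrow> vec \<Rightarrow> vec) \<Rightarrow> vec \<Rightarrow> real measure" where
  "spec_meas E x = interval_measure (\<lambda>t. (vnorm (E t x))\<^sup>2)"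

text \<open>The integral of phi against the complex measure d<E_t x|y>, obtained by
  polarisation: <E x|y> = 1/4 sum_k i^k ||E (x + i^k y)||^2.\<close>

definition spec_int :: "(real \<Rightarrow> vec \<Rightarrow> vec) \<Rightarrow> (real \<Rightarrow> complex) \<Rightarrow> vec \<Rightarrow> vec \<Rightarrow> complex" where
  "spec_int E \<phi> x y =
     (\<Sum>k<4::nat. \<i> ^ k * (LINT t|spec_meas E (lincomb 1 x (\<i> ^ k) y). \<phi> t)) / 4"

definition fcalc :: "nat set \<Rightarrow> (real \<Rightarrow> vec \<Rightarrow> vec) \<Rightarrow> (real \<Rightarrow> complex) \<Rightarrow> vec \<Rightarrow> vec" where
  "fcalc I E \<phi> x = (THE z. z \<in> l2 I \<and> (\<forall>y\<in>l2 I. ip z y = spec_int E \<phi> x y))"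

definition selfadjoint :: "nat set \<Rightarrow> vec set \<Rightarrow> (vec \<Rightarrow> vec) \<Rightarrow> bool" where
  "selfadjoint I D H \<longleftrightarrow>
     D \<subseteq> l2 I \<and>
     (\<forall>x\<in>D. \<forall>y\<in>D. \<forall>a b. lincomb a x b y \<in> D \<and> H (lincomb a x b y) = lincomb a (H x) b (H y)) \<and>
     (\<forall>x\<in>D. H x \<in> l2 I) \<and>
     (\<forall>x\<in>l2 I. \<forall>\<epsilon>>0. \<exists>d\<in>D. vnorm (\<lambda>n. x n - d n) < \<epsilon>) \<and>
     (\<forall>y\<in>l2 I. y \<in> D \<longleftrightarrow> (\<exists>z\<in>l2 I. \<forall>x\<in>D. ip (H x) y = ip x z)) \<and>
     (\<forall>x\<in>D. \<forall>y\<in>D. ip (H x) y = ip x (H y))"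

definition spectral_family_of :: "nat set \<Rightarrow> vec set \<Rightarrow> (vec \<Rightarrow> vec) \<Rightarrow> (real \<Rightarrow> vec \<Rightarrow> vec) \<Rightarrow> bool" where
  "spectral_family_of I D H E \<longleftrightarrow>
     spectral_family I E \<and>
     (\<forall>x\<in>l2 I. x \<in> D \<longleftrightarrow> integrable (spec_meas E x) (\<lambda>t. t\<^sup>2)) \<and>
     (\<forall>x\<in>D. \<forall>y\<in>D. ip (H x) y = spec_int E (\<lambda>t. complex_of_real t) x y)"

text \<open>C_0^infinity(R): smooth complex functions all of whose derivatives vanish at infinity.\<close>

definition C0_infty :: "(real \<Rightarrow> complex) \<Rightarrow> bool" where
  "C0_infty chi \<longleftrightarrow> (\<exists>d :: nat \<Rightarrow> real \<Rightarrow> complex. d 0 = chi \<and>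
     (\<forall>k x. (d k has_vector_derivative d (Suc k) x) (at x)) \<and>
     (\<forall>k. (d k \<longlongrightarrow> 0) at_infinity))"

end

theory Submission
  imports Defs "HOL-Probability.Distribution_Functions"
begin

(* Write F(t) = <E_t f|g> and Phi(mu) = <E_mu chi(H) f|g>.  Since E_mu E_t = E_(min mu t), Phi(mu) is
   the spectral integral of chi against t |-> F(min mu t), and integration by parts (chi is C^1 and
   bounded) gives, for a <= mu,
     Phi(mu) - Phi(a) = chi(mu) F(mu) - chi(a) F(a) - int_a^mu F chi'.
   Differentiating at lambda, the two terms chi'(lambda) F(lambda) cancel and chi(lambda) F'(lambda)
   remains.  The complex measure d<E_t f|y> is reduced by polarization to the four Lebesgue-Stieltjes
   measures d||E_t u||^2, and chi(H) f is the Riesz representer of the bounded antilinear functional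
   y |-> int chi d<E f|y> on l2. *)

section \<open>Square-summable sequences\<close>

definition square_summable :: "vec \<Rightarrow> bool" where
  "square_summable x \<longleftrightarrow> summable (\<lambda>n. (cmod (x n))\<^sup>2)"

lemma l2_imp_square_summable: "x \<in> l2 I \<Longrightarrow> square_summable x"
  by (simp add: l2_def square_summable_def)

lemma norm_lincomb_square_le:
  "(cmod (a * x + b * y))\<^sup>2 \<le> 2 * (cmod a)\<^sup>2 * (cmod x)\<^sup>2 + 2 * (cmod b)\<^sup>2 * (cmod y)\<^sup>2"
proof -
  have "cmod (a * x + b * y) \<le> cmod a * cmod x + cmod b * cmod y"
    by (metis norm_mult norm_triangle_ineq)
  hence "(cmod (a * x + b * y))\<^sup>2 \<le> (cmod a * cmod x + cmod b * cmod y)\<^sup>2"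
    by (simp add: power_mono)
  also have "\<dots> \<le> 2 * (cmod a * cmod x)\<^sup>2 + 2 * (cmod b * cmod y)\<^sup>2"
    using sum_squares_bound[of "cmod a * cmod x" "cmod b * cmod y"] by (simp add: power2_sum)
  finally show ?thesis by (simp add: power_mult_distrib)
qed

lemma square_summable_lincomb:
  assumes "square_summable x" "square_summable y"
  shows "square_summable (lincomb a x b y)"
proof -
  have "summable (\<lambda>n. 2 * (cmod a)\<^sup>2 * (cmod (x n))\<^sup>2 + 2 * (cmod b)\<^sup>2 * (cmod (y n))\<^sup>2)"
    using assms unfolding square_summable_def by (intro summable_add summable_mult)
  thus ?thesis unfolding square_summable_def lincomb_def
    by (rule summable_comparison_test'[where N=0]) (simp add: norm_lincomb_square_le)
qed

lemma l2_lincomb: "x \<in> l2 I \<Longrightarrow> y \<in> l2 I \<Longrightarrow> lincomb a x b y \<in> l2 I"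
  using square_summable_lincomb[of x y a b] by (auto simp: l2_def square_summable_def lincomb_def)

lemma summable_norm_ip_terms:
  assumes "square_summable x" "square_summable y"
  shows "summable (\<lambda>n. norm (x n * cnj (y n)))"
proof (rule summable_comparison_test'[where N=0])
  show "summable (\<lambda>n. (cmod (x n))\<^sup>2 + (cmod (y n))\<^sup>2)"
    using assms unfolding square_summable_def by (intro summable_add)
  show "norm (norm (x n * cnj (y n))) \<le> (cmod (x n))\<^sup>2 + (cmod (y n))\<^sup>2" for n
  proof -
    have "norm (norm (x n * cnj (y n))) = cmod (x n) * cmod (y n)" by (simp add: norm_mult)
    moreover have "0 \<le> cmod (x n) * cmod (y n)" by simp
    ultimately show ?thesis using sum_squares_bound[of "cmod (x n)" "cmod (y n)"] by linarith
  qed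
qed

lemma summable_ip_terms:
  "square_summable x \<Longrightarrow> square_summable y \<Longrightarrow> summable (\<lambda>n. x n * cnj (y n))"
  by (rule summable_norm_cancel[OF summable_norm_ip_terms])

lemma ip_lincomb_left:
  assumes "square_summable x" "square_summable y" "square_summable z"
  shows "ip (lincomb a x b y) z = a * ip x z + b * ip y z"
proof -
  have "ip (lincomb a x b y) z = (\<Sum>n. a * (x n * cnj (z n)) + b * (y n * cnj (z n)))"
    unfolding ip_def lincomb_def by (simp add: algebra_simps)
  also have "\<dots> = a * ip x z + b * ip y z"
    unfolding ip_def using summable_ip_terms[OF assms(1,3)] summable_ip_terms[OF assms(2,3)]
    by (simp add: suminf_add[symmetric] suminf_mult summable_mult)
  finally show ?thesis .
qed

lemma ip_lincomb_right:
  assumes "square_summable x" "square_summable y" "square_summable z"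
  shows "ip z (lincomb a x b y) = cnj a * ip z x + cnj b * ip z y"
proof -
  have "ip z (lincomb a x b y) = (\<Sum>n. cnj a * (z n * cnj (x n)) + cnj b * (z n * cnj (y n)))"
    unfolding ip_def lincomb_def by (simp add: algebra_simps)
  also have "\<dots> = cnj a * ip z x + cnj b * ip z y"
    unfolding ip_def using summable_ip_terms[OF assms(3,1)] summable_ip_terms[OF assms(3,2)]
    by (simp add: suminf_add[symmetric] suminf_mult summable_mult)
  finally show ?thesis .
qed

lemma vnorm_square:
  assumes "square_summable x" shows "(vnorm x)\<^sup>2 = (\<Sum>n. (cmod (x n))\<^sup>2)"
  using assms suminf_nonneg[of "\<lambda>n. (cmod (x n))\<^sup>2"]
  unfolding vnorm_def square_summable_def by simp

lemma vnorm_nonneg: "square_summable x \<Longrightarrow> 0 \<le> vnorm x"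
  by (metis vnorm_def vnorm_square real_sqrt_ge_zero zero_le_power2)

lemma ip_self:
  assumes "square_summable x" shows "ip x x = complex_of_real ((vnorm x)\<^sup>2)"
proof -
  have "(\<lambda>n. x n * cnj (x n)) = (\<lambda>n. complex_of_real ((cmod (x n))\<^sup>2))"
    by (auto simp: complex_mult_cnj cmod_power2 simp del: of_real_power)
  thus ?thesis
    using assms unfolding ip_def vnorm_square[OF assms] square_summable_def
    by (simp add: suminf_of_real)
qed

lemma vnorm_eq_zero: "square_summable x \<Longrightarrow> vnorm x = 0 \<Longrightarrow> x = (\<lambda>n. 0)"
  using suminf_eq_zero_iff[of "\<lambda>n. (cmod (x n))\<^sup>2"]
  by (auto simp: vnorm_square[symmetric] square_summable_def)

lemma vnorm_lincomb_square_le: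
  assumes x: "square_summable x" and y: "square_summable y"
  shows "(vnorm (lincomb a x b y))\<^sup>2 \<le> 2 * (cmod a)\<^sup>2 * (vnorm x)\<^sup>2 + 2 * (cmod b)\<^sup>2 * (vnorm y)\<^sup>2"
proof -
  have S1: "summable (\<lambda>n. 2 * (cmod a)\<^sup>2 * (cmod (x n))\<^sup>2)"
    and S2: "summable (\<lambda>n. 2 * (cmod b)\<^sup>2 * (cmod (y n))\<^sup>2)"
    using x y unfolding square_summable_def by (auto intro: summable_mult)
  have "(vnorm (lincomb a x b y))\<^sup>2 = (\<Sum>n. (cmod (a * x n + b * y n))\<^sup>2)"
    using vnorm_square[OF square_summable_lincomb[OF x y]] by (simp add: lincomb_def)
  also have "\<dots> \<le> (\<Sum>n. 2 * (cmod a)\<^sup>2 * (cmod (x n))\<^sup>2 + 2 * (cmod b)\<^sup>2 * (cmod (y n))\<^sup>2)"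
    using square_summable_lincomb[OF x y, of a b] S1 S2 unfolding square_summable_def lincomb_def
    by (intro suminf_le norm_lincomb_square_le summable_add) auto
  also have "\<dots> = 2 * (cmod a)\<^sup>2 * (vnorm x)\<^sup>2 + 2 * (cmod b)\<^sup>2 * (vnorm y)\<^sup>2"
    using S1 S2 x y by (simp add: suminf_add[symmetric] suminf_mult vnorm_square square_summable_def)
  finally show ?thesis .
qed

lemma l2_eqI:
  assumes "z1 \<in> l2 I" "z2 \<in> l2 I" and eq: "\<And>y. y \<in> l2 I \<Longrightarrow> ip z1 y = ip z2 y"
  shows "z1 = z2"
proof -
  let ?d = "lincomb 1 z1 (-1) z2"
  have d: "?d \<in> l2 I" using assms by (intro l2_lincomb)
  have "ip ?d ?d = ip z1 ?d - ip z2 ?d"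
    using ip_lincomb_left[of z1 z2 ?d 1 "-1"] assms d by (simp add: l2_imp_square_summable)
  hence "vnorm ?d = 0" using eq[OF d] ip_self[OF l2_imp_square_summable[OF d]] by simp
  hence "?d = (\<lambda>n. 0)" using vnorm_eq_zero l2_imp_square_summable[OF d] by blast
  thus ?thesis by (auto simp: lincomb_def fun_eq_iff)
qed

section \<open>Riesz representation on l2\<close>

definition vec_restrict :: "nat set \<Rightarrow> vec \<Rightarrow> vec" where
  "vec_restrict S w = (\<lambda>n. if n \<in> S then w n else 0)"

lemma l2_vec_restrict: "finite S \<Longrightarrow> S \<subseteq> I \<Longrightarrow> vec_restrict S w \<in> l2 I"
  unfolding l2_def vec_restrict_def by (auto intro: summable_finite[of S])

lemma vnorm_vec_restrict_square:
  assumes "finite S" shows "(vnorm (vec_restrict S w))\<^sup>2 = (\<Sum>n\<in>S. (cmod (w n))\<^sup>2)"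
proof -
  have "square_summable (vec_restrict S w)"
    unfolding square_summable_def vec_restrict_def using assms by (intro summable_finite[of S]) auto
  moreover have "(\<Sum>n. (cmod (vec_restrict S w n))\<^sup>2) = (\<Sum>n\<in>S. (cmod (vec_restrict S w n))\<^sup>2)"
    using assms by (intro suminf_finite) (auto simp: vec_restrict_def)
  ultimately show ?thesis by (simp add: vnorm_square vec_restrict_def)
qed

lemma tendsto_vnorm_tail:
  assumes "square_summable y"
  shows "(\<lambda>N. vnorm (\<lambda>n. if n < N then 0 else y n)) \<longlonglongrightarrow> 0"
proof -
  have y: "summable (\<lambda>n. (cmod (y n))\<^sup>2)" using assms by (simp add: square_summable_def)
  have "vnorm (\<lambda>n. if n < N then 0 else y n) = sqrt ((\<Sum>n. (cmod (y n))\<^sup>2) - (\<Sum>n<N. (cmod (y n))\<^sup>2))" for N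
  proof -
    have e1: "(\<lambda>n. (cmod (if n < N then 0 else y n))\<^sup>2) = (\<lambda>n. (cmod (y n))\<^sup>2 - (if n < N then (cmod (y n))\<^sup>2 else 0))"
      by auto
    have e2: "(\<Sum>n. if n < N then (cmod (y n))\<^sup>2 else 0) = (\<Sum>n<N. (cmod (y n))\<^sup>2)"
      by (subst suminf_finite[of "{..<N}"]) auto
    have s2: "summable (\<lambda>n. if n < N then (cmod (y n))\<^sup>2 else 0)"
      by (rule summable_finite[of "{..<N}"]) auto
    show ?thesis unfolding vnorm_def e1 suminf_diff[OF y s2, symmetric] e2 ..
  qed
  moreover have "(\<lambda>N. sqrt ((\<Sum>n. (cmod (y n))\<^sup>2) - (\<Sum>n<N. (cmod (y n))\<^sup>2)))
      \<longlonglongrightarrow> sqrt ((\<Sum>n. (cmod (y n))\<^sup>2) - (\<Sum>n. (cmod (y n))\<^sup>2))"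
    by (intro tendsto_intros summable_LIMSEQ y)
  ultimately show ?thesis by simp
qed

locale bounded_antilinear_l2 =
  fixes I :: "nat set" and L :: "vec \<Rightarrow> complex" and C :: real
  assumes antilinear: "\<And>y1 y2 a b. y1 \<in> l2 I \<Longrightarrow> y2 \<in> l2 I \<Longrightarrow>
      L (lincomb a y1 b y2) = cnj a * L y1 + cnj b * L y2"
    and bounded: "\<And>y. y \<in> l2 I \<Longrightarrow> cmod (L y) \<le> C * vnorm y"
begin

definition representer :: vec where
  "representer n = (if n \<in> I then L (vec_restrict {n} (\<lambda>_. 1)) else 0)"

lemma L_vec_restrict:
  assumes "finite S" "S \<subseteq> I"
  shows "L (vec_restrict S w) = (\<Sum>n\<in>S. cnj (w n) * representer n)"
  using assms
proof (induction S rule: finite_induct)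
  case empty
  have "L (vec_restrict {} w) = L (lincomb 0 (vec_restrict {} w) 0 (vec_restrict {} w))"
    by (simp add: lincomb_def vec_restrict_def)
  thus ?case using antilinear l2_vec_restrict[of "{}" I] by simp
next
  case (insert n S)
  have "vec_restrict (insert n S) w = lincomb 1 (vec_restrict S w) (w n) (vec_restrict {n} (\<lambda>_. 1))"
    using insert.hyps by (auto simp: vec_restrict_def lincomb_def fun_eq_iff)
  hence "L (vec_restrict (insert n S) w) = L (vec_restrict S w) + cnj (w n) * representer n"
    using insert.prems insert.hyps by (simp add: antilinear l2_vec_restrict representer_def)
  thus ?case using insert by simp
qed

lemma representer_outside: "n \<notin> I \<Longrightarrow> representer n = 0"
  by (simp add: representer_def)

lemma sum_representer_square_le:
  assumes S: "finite S" "S \<subseteq> I"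
  shows "(\<Sum>n\<in>S. (cmod (representer n))\<^sup>2) \<le> C\<^sup>2"
proof -
  define A where "A = (\<Sum>n\<in>S. (cmod (representer n))\<^sup>2)"
  have A: "0 \<le> A" unfolding A_def by (simp add: sum_nonneg)
  have "L (vec_restrict S representer) = complex_of_real A"
    unfolding L_vec_restrict[OF S] A_def
    by (simp add: complex_mult_cnj cmod_power2 mult.commute del: of_real_power)
  hence "A \<le> C * vnorm (vec_restrict S representer)"
    using bounded[OF l2_vec_restrict[OF S, of representer]] A by simp
  also have "vnorm (vec_restrict S representer) = sqrt A"
    using vnorm_vec_restrict_square[OF S(1)] vnorm_nonneg l2_imp_square_summable[OF l2_vec_restrict[OF S]]
    unfolding A_def by (metis real_sqrt_unique)
  finally have AC: "A \<le> C * sqrt A" .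
  show ?thesis
  proof (cases "A = 0")
    case False
    hence pos: "0 < sqrt A" using A by simp
    have "sqrt A * sqrt A \<le> C * sqrt A" using AC A by simp
    hence "sqrt A \<le> C" by (rule mult_right_le_imp_le[OF _ pos])
    hence "(sqrt A)\<^sup>2 \<le> C\<^sup>2" using pos by (intro power_mono) auto
    thus ?thesis using A by (simp add: A_def)
  qed (simp add: A_def)
qed

lemma representer_l2: "representer \<in> l2 I"
proof -
  have "(\<Sum>n<N. (cmod (representer n))\<^sup>2) \<le> C\<^sup>2" for N
  proof -
    have "(\<Sum>n<N. (cmod (representer n))\<^sup>2) = (\<Sum>n\<in>{..<N} \<inter> I. (cmod (representer n))\<^sup>2)"
      by (rule sum.mono_neutral_right) (auto simp: representer_outside)
    also have "\<dots> \<le> C\<^sup>2" by (intro sum_representer_square_le) auto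
    finally show ?thesis .
  qed
  hence "summable (\<lambda>n. (cmod (representer n))\<^sup>2)"
    by (intro summableI_nonneg_bounded[where x="C\<^sup>2"]) auto
  thus ?thesis unfolding l2_def using representer_outside by auto
qed

lemma ip_representer:
  assumes y: "y \<in> l2 I" shows "ip representer y = L y"
proof -
  define yN where "yN N = vec_restrict ({..<N} \<inter> I) y" for N
  have yN: "yN N \<in> l2 I" for N unfolding yN_def by (intro l2_vec_restrict) auto
  have tail: "(\<lambda>n. if n < N then 0 else y n) = lincomb 1 y (-1) (yN N)" for N
    using y by (auto simp: lincomb_def yN_def vec_restrict_def fun_eq_iff l2_def)
  have partial: "L (yN N) = (\<Sum>n<N. representer n * cnj (y n))" for N
  proof -
    have "L (yN N) = (\<Sum>n\<in>{..<N} \<inter> I. cnj (y n) * representer n)"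
      unfolding yN_def by (intro L_vec_restrict) auto
    also have "\<dots> = (\<Sum>n<N. cnj (y n) * representer n)"
      by (rule sum.mono_neutral_left) (auto simp: representer_outside)
    finally show ?thesis by (simp add: mult.commute)
  qed
  have "summable (\<lambda>n. representer n * cnj (y n))"
    by (rule summable_ip_terms[OF l2_imp_square_summable[OF representer_l2] l2_imp_square_summable[OF y]])
  hence lim_ip: "(\<lambda>N. L (yN N)) \<longlonglongrightarrow> ip representer y"
    unfolding ip_def partial by (rule summable_LIMSEQ)
  have bound: "norm (L y - L (yN N)) \<le> C * vnorm (\<lambda>n. if n < N then 0 else y n)" for N
  proof -
    have "L y - L (yN N) = L (lincomb 1 y (-1) (yN N))" using antilinear[OF y yN] by simp
    thus ?thesis using bounded[OF l2_lincomb[OF y yN]] by (simp add: tail)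
  qed
  have "(\<lambda>N. C * vnorm (\<lambda>n. if n < N then 0 else y n)) \<longlonglongrightarrow> C * 0"
    by (intro tendsto_intros tendsto_vnorm_tail l2_imp_square_summable[OF y])
  hence "(\<lambda>N. L y - L (yN N)) \<longlonglongrightarrow> 0"
    using Lim_null_comparison[OF always_eventually[OF allI[OF bound]]] by simp
  hence "(\<lambda>N. L y - (L y - L (yN N))) \<longlonglongrightarrow> L y - 0"
    by (intro tendsto_intros)
  hence "(\<lambda>N. L (yN N)) \<longlonglongrightarrow> L y" by simp
  with lim_ip show ?thesis by (rule LIMSEQ_unique)
qed

end

section \<open>Lebesgue--Stieltjes integration by parts\<close>

lemma set_integrable_mono_mult_continuous:
  fixes F :: "real \<Rightarrow> real" and c :: "real \<Rightarrow> complex"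
  assumes mono: "mono F" and cont: "continuous_on {a..b} c"
  shows "set_integrable lborel {a..b} (\<lambda>t. of_real (F t) * c t)"
proof (cases "a \<le> b")
  case False
  thus ?thesis by (simp add: set_integrable_def)
next
  case ab: True
  have [measurable]: "F \<in> borel_measurable borel" using borel_measurable_mono[OF mono] .
  have [measurable]: "(\<lambda>t. indicator {a..b} t *\<^sub>R c t) \<in> borel_measurable borel"
    using cont by (intro borel_measurable_continuous_on_indicator) auto
  obtain K where K: "\<And>t. t \<in> {a..b} \<Longrightarrow> norm (c t) \<le> K"
    using compact_imp_bounded[OF compact_continuous_image[OF cont compact_Icc]]
    unfolding bounded_iff by blast
  show ?thesis
    unfolding set_integrable_def
  proof (rule integrableI_bounded_set[where A="{a..b}" and B="(\<bar>F a\<bar> + \<bar>F b\<bar>) * K"])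
    show "AE t in lborel. t \<in> {a..b} \<longrightarrow> norm (indicator {a..b} t *\<^sub>R (of_real (F t) * c t)) \<le> (\<bar>F a\<bar> + \<bar>F b\<bar>) * K"
    proof (intro AE_I2 impI)
      fix t assume t: "t \<in> {a..b}"
      have "\<bar>F t\<bar> \<le> \<bar>F a\<bar> + \<bar>F b\<bar>" using monoD[OF mono, of a t] monoD[OF mono, of t b] t by auto
      hence "\<bar>F t\<bar> * norm (c t) \<le> (\<bar>F a\<bar> + \<bar>F b\<bar>) * K"
        using K[OF t] by (intro mult_mono) auto
      thus "norm (indicator {a..b} t *\<^sub>R (of_real (F t) * c t)) \<le> (\<bar>F a\<bar> + \<bar>F b\<bar>) * K"
        using t by (simp add: norm_mult)
    qed
    have eq: "(\<lambda>t. indicator {a..b} t *\<^sub>R (of_real (F t) * c t)) = (\<lambda>t. of_real (F t) * (indicator {a..b} t *\<^sub>R c t))"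
      by (auto simp: indicator_def)
    show "(\<lambda>t. indicator {a..b} t *\<^sub>R (of_real (F t) * c t)) \<in> borel_measurable lborel"
      unfolding eq by measurable
  qed (use ab in \<open>auto simp: emeasure_lborel_Icc\<close>)
qed

(* For a distribution function F this is the integration-by-parts form of the Stieltjes integral of c
   over (-n, n]; unlike the Stieltjes integral it is linear in F, so it passes through polarization. *)
definition parts_approx :: "(real \<Rightarrow> complex) \<Rightarrow> (real \<Rightarrow> complex) \<Rightarrow> nat \<Rightarrow> (real \<Rightarrow> complex) \<Rightarrow> complex" where
  "parts_approx c c' n F = c (real n) * F (real n) - c (- real n) * F (- real n)
     - integral {- real n..real n} (\<lambda>t. F t * c' t)"

lemma parts_approx_sum:
  assumes "finite K" and int: "\<And>k. k \<in> K \<Longrightarrow> (\<lambda>t. F k t * c' t) integrable_on {- real n..real n}"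
  shows "parts_approx c c' n (\<lambda>t. \<Sum>k\<in>K. a k * F k t) = (\<Sum>k\<in>K. a k * parts_approx c c' n (F k))"
proof -
  have "integral {- real n..real n} (\<lambda>t. (\<Sum>k\<in>K. a k * F k t) * c' t)
      = integral {- real n..real n} (\<lambda>t. \<Sum>k\<in>K. a k * (F k t * c' t))"
    by (simp add: sum_distrib_right mult.assoc)
  also have "\<dots> = (\<Sum>k\<in>K. a k * integral {- real n..real n} (\<lambda>t. F k t * c' t))"
    by (subst integral_sum[OF assms(1)]) (auto intro: integrable_on_mult_right int)
  finally show ?thesis unfolding parts_approx_def
    by (simp add: sum_distrib_left sum_subtractf right_diff_distrib mult.left_commute)
qed

lemma parts_approx_lincomb:
  assumes "(\<lambda>t. F1 t * c' t) integrable_on {- real n..real n}"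
    and "(\<lambda>t. F2 t * c' t) integrable_on {- real n..real n}"
  shows "parts_approx c c' n (\<lambda>t. a * F1 t + b * F2 t) = a * parts_approx c c' n F1 + b * parts_approx c c' n F2"
  using parts_approx_sum[of "{True, False}" "\<lambda>k. if k then F1 else F2" c' n c "\<lambda>k. if k then a else b"] assms
  by (simp add: if_distrib)

lemma parts_approx_min:
  fixes F c c' :: "real \<Rightarrow> complex"
  assumes c: "\<And>t. (c has_vector_derivative c' t) (at t)"
    and int: "\<And>a b. (\<lambda>t. F t * c' t) integrable_on {a..b}"
    and n: "- real n \<le> a" "a \<le> \<mu>" "\<mu> \<le> real n"
  shows "parts_approx c c' n (\<lambda>t. F (min \<mu> t)) = c \<mu> * F \<mu> - integral {a..\<mu>} (\<lambda>t. F t * c' t)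
    - (c (- real n) * F (- real n) + integral {- real n..a} (\<lambda>t. F t * c' t))"
proof -
  let ?Fc' = "\<lambda>t. F t * c' t"
  have "((\<lambda>t. F (min \<mu> t) * c' t) has_integral integral {- real n..\<mu>} ?Fc') {- real n..\<mu>}"
    by (rule has_integral_eq[OF _ integrable_integral[OF int]]) (force simp: min_def)
  moreover have "(c' has_integral (c (real n) - c \<mu>)) {\<mu>..real n}"
    using n by (intro fundamental_theorem_of_calculus) (auto intro: has_vector_derivative_at_within c)
  hence "((\<lambda>t. F (min \<mu> t) * c' t) has_integral F \<mu> * (c (real n) - c \<mu>)) {\<mu>..real n}"
    by (intro has_integral_eq[OF _ has_integral_mult_right]) (auto simp: min_def)
  ultimately have "((\<lambda>t. F (min \<mu> t) * c' t) has_integral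
      integral {- real n..\<mu>} ?Fc' + F \<mu> * (c (real n) - c \<mu>)) {- real n..real n}"
    using n by (intro has_integral_combine) auto
  moreover have "integral {- real n..\<mu>} ?Fc' = integral {- real n..a} ?Fc' + integral {a..\<mu>} ?Fc'"
    using n by (intro Henstock_Kurzweil_Integration.integral_combine[symmetric] int) auto
  moreover have "min \<mu> (real n) = \<mu>" "min \<mu> (- real n) = - real n" using n by auto
  ultimately show ?thesis
    unfolding parts_approx_def by (simp add: integral_unique algebra_simps)
qed

locale distribution_function =
  fixes F :: "real \<Rightarrow> real" and m :: real
  assumes mono: "mono F"
    and right_cont: "\<And>a. continuous (at_right a) F"
    and lim_at_bot: "(F \<longlongrightarrow> 0) at_bot"
    and lim_at_top: "(F \<longlongrightarrow> m) at_top"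
begin

lemma nonneg: "0 \<le> F x"
  using lim_at_bot
  by (rule tendsto_upperbound) (auto simp: eventually_at_bot_linorder intro!: exI[of _ x] monoD[OF mono])

lemma total_nonneg: "0 \<le> m"
  using lim_at_top by (rule tendsto_lowerbound) (auto simp: nonneg)

sublocale M: finite_borel_measure "interval_measure F"
  by (rule finite_borel_measure_interval_measure[OF monoD[OF mono] right_cont lim_at_bot lim_at_top total_nonneg])

lemma measure_UNIV: "measure (interval_measure F) UNIV = m"
  using interval_measure_UNIV[OF monoD[OF mono] right_cont lim_at_bot lim_at_top total_nonneg] total_nonneg
  by (simp add: measure_def)

lemma measure_Ioc: "a \<le> b \<Longrightarrow> measure (interval_measure F) {a<..b} = F b - F a"
  by (simp add: measure_interval_measure_Ioc monoD[OF mono] right_cont)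

lemma integrable_triangle_kernel:
  fixes c' :: "real \<Rightarrow> complex"
  assumes c': "continuous_on UNIV c'" and ab: "a \<le> b"
  shows "integrable (interval_measure F \<Otimes>\<^sub>M lborel) (\<lambda>(s, t). if a < s \<and> s \<le> t \<and> t \<le> b then c' t else 0)"
proof -
  have [measurable]: "c' \<in> borel_measurable borel"
    using c' by (rule borel_measurable_continuous_onI)
  obtain K where K: "\<And>t. t \<in> {a..b} \<Longrightarrow> norm (c' t) \<le> K"
    using compact_imp_bounded[OF compact_continuous_image[OF continuous_on_subset[OF c'] compact_Icc]]
    unfolding bounded_iff by blast
  show ?thesis
  proof (rule integrableI_bounded_set[where A="{a<..b} \<times> {a..b}" and B=K])
    have "(\<lambda>(s, t). if a < s \<and> s \<le> t \<and> t \<le> b then c' t else 0) \<in> borel_measurable (borel \<Otimes>\<^sub>M borel)"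
      by measurable
    moreover have "sets (interval_measure F \<Otimes>\<^sub>M lborel) = sets (borel \<Otimes>\<^sub>M borel)"
      by (intro sets_pair_measure_cong) auto
    ultimately show "(\<lambda>(s, t). if a < s \<and> s \<le> t \<and> t \<le> b then c' t else 0)
        \<in> borel_measurable (interval_measure F \<Otimes>\<^sub>M lborel)"
      using measurable_cong_sets by blast
    show "emeasure (interval_measure F \<Otimes>\<^sub>M lborel) ({a<..b} \<times> {a..b}) < \<infinity>"
      by (subst lborel.emeasure_pair_measure_Times)
        (use ab in \<open>auto simp: less_top[symmetric] ennreal_mult_eq_top_iff M.emeasure_finite emeasure_lborel_Icc\<close>)
    show "AE x in interval_measure F \<Otimes>\<^sub>M lborel. x \<in> {a<..b} \<times> {a..b} \<longrightarrow>
        norm (case x of (s, t) \<Rightarrow> if a < s \<and> s \<le> t \<and> t \<le> b then c' t else 0) \<le> K"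
      using K order_trans[OF norm_ge_zero K[of a]] ab by auto
    show "AE x in interval_measure F \<Otimes>\<^sub>M lborel. x \<notin> {a<..b} \<times> {a..b} \<longrightarrow>
        (case x of (s, t) \<Rightarrow> if a < s \<and> s \<le> t \<and> t \<le> b then c' t else 0) = 0"
      by (intro AE_I2) (auto split: prod.splits)
  qed (intro pair_measureI; auto)
qed

lemma swap_triangle_integral:
  fixes c c' :: "real \<Rightarrow> complex"
  assumes c: "\<And>t. (c has_vector_derivative c' t) (at t)" and c': "continuous_on UNIV c'"
    and ab: "a \<le> b"
  shows "(LINT s:{a<..b}|interval_measure F. c b - c s) = (LBINT t:{a..b}. of_real (F t - F a) * c' t)"
proof -
  define h where "h s t = (if a < s \<and> s \<le> t \<and> t \<le> b then c' t else 0)" for s t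
  interpret P: pair_sigma_finite "interval_measure F" lborel
    by (simp add: pair_sigma_finite_def lborel.sigma_finite_measure_axioms M.sigma_finite_measure_axioms)
  have "integrable (interval_measure F \<Otimes>\<^sub>M lborel) (\<lambda>(s, t). h s t)"
    unfolding h_def by (rule integrable_triangle_kernel[OF c' ab])
  hence "(\<integral>t. (\<integral>s. h s t \<partial>interval_measure F) \<partial>lborel) = (\<integral>s. (\<integral>t. h s t \<partial>lborel) \<partial>interval_measure F)"
    using P.Fubini_integral[of h] by simp
  moreover have "(\<integral>s. h s t \<partial>interval_measure F) = indicator {a..b} t *\<^sub>R (of_real (F t - F a) * c' t)" for t
  proof (cases "a \<le> t \<and> t \<le> b")
    case True
    hence "(\<lambda>s. h s t) = (\<lambda>s. of_real (indicator {a<..t} s) * c' t)"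
      by (auto simp: h_def indicator_def)
    thus ?thesis using True by (simp add: measure_Ioc)
  next
    case False
    hence "(\<lambda>s. h s t) = (\<lambda>s. 0)" by (auto simp: h_def fun_eq_iff)
    thus ?thesis using False by simp
  qed
  moreover have "(\<integral>t. h s t \<partial>lborel) = indicator {a<..b} s *\<^sub>R (c b - c s)" for s
  proof (cases "a < s \<and> s \<le> b")
    case True
    hence "(\<lambda>t. h s t) = (\<lambda>t. indicator {s..b} t *\<^sub>R c' t)"
      by (auto simp: h_def indicator_def)
    hence "(\<integral>t. h s t \<partial>lborel) = (LBINT t=s..b. c' t)"
      using True by (simp add: set_lebesgue_integral_def interval_integral_Icc)
    also have "\<dots> = c b - c s"
      using True by (intro interval_integral_FTC_finite continuous_on_subset[OF c'])
        (auto intro: has_vector_derivative_at_within c)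
    finally show ?thesis using True by simp
  next
    case False
    hence "(\<lambda>t. h s t) = (\<lambda>t. 0)" by (auto simp: h_def fun_eq_iff)
    thus ?thesis using False by simp
  qed
  ultimately show ?thesis by (simp add: set_lebesgue_integral_def)
qed

lemma integral_Ioc_by_parts:
  fixes c c' :: "real \<Rightarrow> complex"
  assumes c: "\<And>t. (c has_vector_derivative c' t) (at t)" and c': "continuous_on UNIV c'"
    and ab: "a \<le> b"
  shows "(LINT s:{a<..b}|interval_measure F. c s)
    = c b * F b - c a * F a - integral {a..b} (\<lambda>t. of_real (F t) * c' t)"
proof -
  have cont_c: "continuous_on UNIV c"
    using c by (meson continuous_at_imp_continuous_on has_vector_derivative_continuous)
  have [measurable]: "c \<in> borel_measurable borel"
    using cont_c by (rule borel_measurable_continuous_onI)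
  obtain K where K: "\<And>t. t \<in> {a..b} \<Longrightarrow> norm (c t) \<le> K"
    using compact_imp_bounded[OF compact_continuous_image[OF continuous_on_subset[OF cont_c] compact_Icc]]
    unfolding bounded_iff by blast
  have "set_integrable (interval_measure F) {a<..b} c"
    unfolding set_integrable_def
    by (rule integrableI_bounded_set[where A="{a<..b}" and B=K])
      (auto simp: K less_top[symmetric] M.emeasure_finite)
  hence "(LINT s:{a<..b}|interval_measure F. c b - c s)
      = of_real (F b - F a) * c b - (LINT s:{a<..b}|interval_measure F. c s)"
    using ab by (subst set_integral_diff(2))
      (auto simp: set_integrable_def set_lebesgue_integral_def measure_Ioc scaleR_conv_of_real
        less_top[symmetric] M.emeasure_finite)
  hence X: "(LINT s:{a<..b}|interval_measure F. c s)
      = of_real (F b - F a) * c b - (LBINT t:{a..b}. of_real (F t - F a) * c' t)"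
    unfolding swap_triangle_integral[OF c c' ab] by (simp add: algebra_simps)
  have Fc': "set_integrable lborel {a..b} (\<lambda>t. of_real (F t) * c' t)"
    by (rule set_integrable_mono_mult_continuous[OF mono continuous_on_subset[OF c']]) simp
  have J: "(LBINT t:{a..b}. c' t) = c b - c a"
    using ab interval_integral_Icc[of a b c', symmetric]
      interval_integral_FTC_finite[of a b c' c] continuous_on_subset[OF c']
    by (auto intro: has_vector_derivative_at_within c)
  have "set_integrable lborel {a..b} c'"
    by (intro borel_integrable_atLeastAtMost' continuous_on_subset[OF c']) auto
  hence "(LBINT t:{a..b}. of_real (F t) * c' t - of_real (F a) * c' t)
      = (LBINT t:{a..b}. of_real (F t) * c' t) - of_real (F a) * (LBINT t:{a..b}. c' t)"
    using Fc' by (subst set_integral_diff(2)) (auto intro: set_integrable_mult_right)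
  hence Y: "(LBINT t:{a..b}. of_real (F t - F a) * c' t)
      = integral {a..b} (\<lambda>t. of_real (F t) * c' t) - of_real (F a) * (c b - c a)"
    unfolding J set_borel_integral_eq_integral(2)[OF Fc', symmetric]
    by (simp add: of_real_diff left_diff_distrib)
  show ?thesis unfolding X Y by (simp add: algebra_simps)
qed

lemma tendsto_parts_approx:
  fixes c c' :: "real \<Rightarrow> complex"
  assumes c: "\<And>t. (c has_vector_derivative c' t) (at t)" and c': "continuous_on UNIV c'"
    and bounded: "\<And>t. norm (c t) \<le> B"
  shows "(\<lambda>n. parts_approx c c' n (\<lambda>t. of_real (F t))) \<longlonglongrightarrow> (LINT s|interval_measure F. c s)"
proof -
  have [measurable]: "c \<in> borel_measurable borel"
    using c by (intro borel_measurable_continuous_onI continuous_at_imp_continuous_on)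
      (meson has_vector_derivative_continuous)
  have "parts_approx c c' n (\<lambda>t. of_real (F t))
      = (\<integral>s. indicator {- real n<..real n} s *\<^sub>R c s \<partial>interval_measure F)" for n
    using integral_Ioc_by_parts[OF c c', of "- real n" "real n"]
    by (simp add: parts_approx_def set_lebesgue_integral_def)
  moreover have "(\<lambda>n. \<integral>s. indicator {- real n<..real n} s *\<^sub>R c s \<partial>interval_measure F)
      \<longlonglongrightarrow> (\<integral>s. c s \<partial>interval_measure F)"
  proof (rule integral_dominated_convergence[where w="\<lambda>_. B"])
    show "AE s in interval_measure F. (\<lambda>n. indicator {- real n<..real n} s *\<^sub>R c s) \<longlonglongrightarrow> c s"
    proof (intro AE_I2 tendsto_eventually)
      fix s
      show "\<forall>\<^sub>F n in sequentially. indicator {- real n<..real n} s *\<^sub>R c s = c s"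
        using eventually_gt_at_top[of "nat \<lceil>\<bar>s\<bar>\<rceil>"]
        by eventually_elim (auto simp: indicator_def, linarith+)
    qed
    show "\<And>n. AE s in interval_measure F. norm (indicator {- real n<..real n} s *\<^sub>R c s) \<le> B"
      using bounded order_trans[OF norm_ge_zero bounded] by (auto simp: indicator_def)
  qed auto
  ultimately show ?thesis by simp
qed

lemma norm_integral_le:
  fixes c :: "real \<Rightarrow> complex"
  assumes "\<And>t. norm (c t) \<le> B"
  shows "norm (LINT s|interval_measure F. c s) \<le> B * m"
proof -
  have "norm (LINT s|interval_measure F. c s) \<le> (LINT s|interval_measure F. norm (c s))"
    by (rule integral_norm_bound)
  also have "\<dots> \<le> (LINT s|interval_measure F. B)"
    using assms order_trans[OF norm_ge_zero assms] by (intro integral_mono') auto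
  finally show ?thesis by (simp add: measure_UNIV mult.commute)
qed

end

section \<open>Spectral families and the spectral integral\<close>

locale spectral_resolution =
  fixes I :: "nat set" and E :: "real \<Rightarrow> vec \<Rightarrow> vec"
  assumes spectral_family: "spectral_family I E"
begin

lemma orth_proj_E: "orth_proj I (E t)"
  using spectral_family unfolding spectral_family_def by auto

lemma l2_E: "x \<in> l2 I \<Longrightarrow> E t x \<in> l2 I"
  using orth_proj_E[of t] unfolding orth_proj_def bounded_op_def by auto

lemma square_summable_E: "x \<in> l2 I \<Longrightarrow> square_summable (E t x)"
  using l2_E l2_imp_square_summable by blast

lemma E_lincomb: "x \<in> l2 I \<Longrightarrow> y \<in> l2 I \<Longrightarrow> E t (lincomb a x b y) = lincomb a (E t x) b (E t y)"
  using orth_proj_E[of t] unfolding orth_proj_def bounded_op_def by auto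

lemma ip_E_left: "x \<in> l2 I \<Longrightarrow> y \<in> l2 I \<Longrightarrow> ip (E t x) y = ip x (E t y)"
  using orth_proj_E[of t] unfolding orth_proj_def by auto

lemma E_E: "x \<in> l2 I \<Longrightarrow> E s (E t x) = E (min s t) x"
  using spectral_family unfolding spectral_family_def by auto

lemma ip_E_E: "x \<in> l2 I \<Longrightarrow> y \<in> l2 I \<Longrightarrow> ip (E t x) (E t y) = ip (E t x) y"
  using ip_E_left[of x "E t y" t] ip_E_left[of x y t] E_E[of y t t] l2_E[of y t] by simp

lemma ip_E_E_min: "x \<in> l2 I \<Longrightarrow> y \<in> l2 I \<Longrightarrow> ip (E t x) (E s y) = ip (E (min s t) x) y"
  using ip_E_left[OF l2_E, of x y s t] E_E[of x s t] by simp

lemma vnorm_square_diff_E: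
  assumes u: "u \<in> l2 I"
  shows "(vnorm u)\<^sup>2 - (vnorm (E s u))\<^sup>2 = (vnorm (\<lambda>n. u n - E s u n))\<^sup>2"
proof -
  let ?v = "E s u"
  have su: "square_summable u" and sv: "square_summable ?v"
    using u by (auto intro: l2_imp_square_summable square_summable_E)
  have "ip (lincomb 1 u (-1) ?v) (lincomb 1 u (-1) ?v) = ip u u - ip u ?v - ip ?v u + ip ?v ?v"
    using su sv square_summable_lincomb[OF su sv, of 1 "-1"] by (simp add: ip_lincomb_left ip_lincomb_right)
  also have "\<dots> = ip u u - ip ?v ?v"
    using ip_E_E[OF u u] ip_E_left[OF u u] by simp
  finally have "complex_of_real ((vnorm (\<lambda>n. u n - E s u n))\<^sup>2) = complex_of_real ((vnorm u)\<^sup>2 - (vnorm ?v)\<^sup>2)"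
    using su sv square_summable_lincomb[OF su sv, of 1 "-1"] by (simp add: ip_self lincomb_def)
  thus ?thesis by (simp only: of_real_eq_iff)
qed

definition spectral_cdf :: "vec \<Rightarrow> real \<Rightarrow> real" where
  "spectral_cdf x t = (vnorm (E t x))\<^sup>2"

lemma spec_meas_eq: "spec_meas E x = interval_measure (spectral_cdf x)"
  unfolding spec_meas_def spectral_cdf_def[abs_def] ..

lemma spectral_cdf_diff:
  assumes x: "x \<in> l2 I" and "s \<le> t"
  shows "spectral_cdf x t - spectral_cdf x s = (vnorm (\<lambda>n. E t x n - E s x n))\<^sup>2"
  using vnorm_square_diff_E[OF l2_E[OF x, of t], of s] E_E[OF x, of s t] assms(2)
  unfolding spectral_cdf_def by (simp add: min_def)

lemma distribution_function_spectral_cdf: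
  assumes x: "x \<in> l2 I"
  shows "distribution_function (spectral_cdf x) ((vnorm x)\<^sup>2)"
proof
  show "mono (spectral_cdf x)"
    by (rule monoI) (metis spectral_cdf_diff[OF x] diff_ge_0_iff_ge zero_le_power2)
  fix t
  have "((\<lambda>s. vnorm (\<lambda>n. E s x n - E t x n)) \<longlongrightarrow> 0) (at_right t)"
    using spectral_family x unfolding spectral_family_def by auto
  hence "((\<lambda>s. spectral_cdf x t + (vnorm (\<lambda>n. E s x n - E t x n))\<^sup>2) \<longlongrightarrow> spectral_cdf x t + 0\<^sup>2) (at_right t)"
    by (intro tendsto_intros)
  moreover have "\<forall>\<^sub>F s in at_right t. spectral_cdf x t + (vnorm (\<lambda>n. E s x n - E t x n))\<^sup>2 = spectral_cdf x s"
    using eventually_at_right_less[of t]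
  proof eventually_elim
    case (elim s)
    thus ?case using spectral_cdf_diff[OF x, of t s] by simp
  qed
  ultimately have "(spectral_cdf x \<longlongrightarrow> spectral_cdf x t) (at_right t)"
    by (simp add: tendsto_cong)
  thus "continuous (at_right t) (spectral_cdf x)"
    by (simp add: continuous_within)
next
  have "((\<lambda>s. vnorm (E s x)) \<longlongrightarrow> 0) at_bot"
    using spectral_family x unfolding spectral_family_def by auto
  hence "((\<lambda>s. (vnorm (E s x))\<^sup>2) \<longlongrightarrow> 0\<^sup>2) at_bot" by (intro tendsto_intros)
  thus "(spectral_cdf x \<longlongrightarrow> 0) at_bot" by (simp add: spectral_cdf_def[abs_def])
next
  have "((\<lambda>s. vnorm (\<lambda>n. E s x n - x n)) \<longlongrightarrow> 0) at_top"
    using spectral_family x unfolding spectral_family_def by auto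
  hence "((\<lambda>s. (vnorm x)\<^sup>2 - (vnorm (\<lambda>n. E s x n - x n))\<^sup>2) \<longlongrightarrow> (vnorm x)\<^sup>2 - 0\<^sup>2) at_top"
    by (intro tendsto_intros)
  moreover have "(vnorm x)\<^sup>2 - (vnorm (\<lambda>n. E s x n - x n))\<^sup>2 = spectral_cdf x s" for s
    using vnorm_square_diff_E[OF x, of s] unfolding spectral_cdf_def vnorm_def
    by (simp add: norm_minus_commute)
  ultimately show "(spectral_cdf x \<longlongrightarrow> (vnorm x)\<^sup>2) at_top" by simp
qed

lemma ip_E_polarization:
  assumes x: "x \<in> l2 I" and y: "y \<in> l2 I"
  shows "ip (E t x) y = (\<Sum>k<4. \<i>^k / 4 * of_real (spectral_cdf (lincomb 1 x (\<i>^k) y) t))"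
proof -
  define p where "p = E t x"
  define q where "q = E t y"
  have p: "square_summable p" and q: "square_summable q"
    unfolding p_def q_def using x y by (auto intro: square_summable_E)
  have "of_real (spectral_cdf (lincomb 1 x (\<i>^k) y) t)
      = ip p p + \<i>^k * ip q p + cnj (\<i>^k) * (ip p q + \<i>^k * ip q q)" for k :: nat
  proof -
    have "of_real (spectral_cdf (lincomb 1 x (\<i>^k) y) t) = ip (lincomb 1 p (\<i>^k) q) (lincomb 1 p (\<i>^k) q)"
      unfolding spectral_cdf_def E_lincomb[OF x y] p_def[symmetric] q_def[symmetric]
      using ip_self[OF square_summable_lincomb[OF p q]] by simp
    thus ?thesis
      using p q square_summable_lincomb[OF p q, of 1 "\<i>^k"] by (simp add: ip_lincomb_left ip_lincomb_right)
  qed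
  hence "(\<Sum>k<4. \<i>^k / 4 * of_real (spectral_cdf (lincomb 1 x (\<i>^k) y) t)) = ip p q"
    by (simp add: eval_nat_numeral algebra_simps)
  thus ?thesis unfolding p_def q_def ip_E_E[OF x y] by simp
qed

end

locale spectral_calculus = spectral_resolution +
  fixes chi chi' :: "real \<Rightarrow> complex" and B :: real
  assumes has_derivative: "\<And>t. (chi has_vector_derivative chi' t) (at t)"
    and continuous_derivative: "continuous_on UNIV chi'"
    and bounded: "\<And>t. norm (chi t) \<le> B"
begin

lemma integrable_spectral_cdf_mult:
  "x \<in> l2 I \<Longrightarrow> (\<lambda>t. of_real (spectral_cdf x t) * chi' t) integrable_on {a..b}"
  using set_integrable_mono_mult_continuous[OF distribution_function.mono[OF distribution_function_spectral_cdf]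
      continuous_on_subset[OF continuous_derivative]]
  by (auto intro: set_borel_integral_eq_integral(1))

lemma integrable_ip_E_mult:
  assumes x: "x \<in> l2 I" and y: "y \<in> l2 I"
  shows "(\<lambda>t. ip (E t x) y * chi' t) integrable_on {a..b}"
proof -
  have "(\<lambda>t. ip (E t x) y * chi' t)
      = (\<lambda>t. \<Sum>k<4. \<i>^k / 4 * (of_real (spectral_cdf (lincomb 1 x (\<i>^k) y) t) * chi' t))"
    unfolding ip_E_polarization[OF x y] by (simp add: sum_distrib_right mult.assoc)
  thus ?thesis
    by (simp only:) (intro integrable_sum integrable_on_mult_right integrable_spectral_cdf_mult l2_lincomb x y; simp)
qed

lemma tendsto_parts_approx_ip_E:
  assumes x: "x \<in> l2 I" and y: "y \<in> l2 I"
  shows "(\<lambda>n. parts_approx chi chi' n (\<lambda>t. ip (E t x) y)) \<longlonglongrightarrow> spec_int E chi x y"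
proof -
  have l2: "lincomb 1 x (\<i>^k) y \<in> l2 I" for k :: nat using x y by (rule l2_lincomb)
  have "parts_approx chi chi' n (\<lambda>t. ip (E t x) y)
      = (\<Sum>k<4. \<i>^k / 4 * parts_approx chi chi' n (\<lambda>t. of_real (spectral_cdf (lincomb 1 x (\<i>^k) y) t)))" for n
    unfolding ip_E_polarization[OF x y, abs_def]
    by (rule parts_approx_sum) (auto intro: integrable_spectral_cdf_mult l2)
  moreover have "(\<lambda>n. parts_approx chi chi' n (\<lambda>t. of_real (spectral_cdf (lincomb 1 x (\<i>^k) y) t)))
      \<longlonglongrightarrow> (LINT t|spec_meas E (lincomb 1 x (\<i>^k) y). chi t)" for k :: nat
    unfolding spec_meas_eq
    by (rule distribution_function.tendsto_parts_approx[OF distribution_function_spectral_cdf[OF l2]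
        has_derivative continuous_derivative bounded])
  hence "(\<lambda>n. \<Sum>k<4. \<i>^k / 4 * parts_approx chi chi' n (\<lambda>t. of_real (spectral_cdf (lincomb 1 x (\<i>^k) y) t)))
      \<longlonglongrightarrow> (\<Sum>k<4. \<i>^k / 4 * (LINT t|spec_meas E (lincomb 1 x (\<i>^k) y). chi t))"
    by (intro tendsto_intros)
  ultimately show ?thesis
    by (simp add: spec_int_def sum_divide_distrib)
qed

lemma spec_int_antilinear:
  assumes x: "x \<in> l2 I" and y1: "y1 \<in> l2 I" and y2: "y2 \<in> l2 I"
  shows "spec_int E chi x (lincomb a y1 b y2) = cnj a * spec_int E chi x y1 + cnj b * spec_int E chi x y2"
proof -
  have eq: "parts_approx chi chi' n (\<lambda>t. ip (E t x) (lincomb a y1 b y2))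
      = cnj a * parts_approx chi chi' n (\<lambda>t. ip (E t x) y1) + cnj b * parts_approx chi chi' n (\<lambda>t. ip (E t x) y2)" for n
    using ip_lincomb_right[OF l2_imp_square_summable[OF y1] l2_imp_square_summable[OF y2] square_summable_E[OF x]]
    by (simp add: parts_approx_lincomb integrable_ip_E_mult x y1 y2)
  have "(\<lambda>n. cnj a * parts_approx chi chi' n (\<lambda>t. ip (E t x) y1) + cnj b * parts_approx chi chi' n (\<lambda>t. ip (E t x) y2))
      \<longlonglongrightarrow> spec_int E chi x (lincomb a y1 b y2)"
    using tendsto_parts_approx_ip_E[OF x l2_lincomb[OF y1 y2], of a b] unfolding eq .
  moreover have "(\<lambda>n. cnj a * parts_approx chi chi' n (\<lambda>t. ip (E t x) y1) + cnj b * parts_approx chi chi' n (\<lambda>t. ip (E t x) y2))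
      \<longlonglongrightarrow> cnj a * spec_int E chi x y1 + cnj b * spec_int E chi x y2"
    by (intro tendsto_intros tendsto_parts_approx_ip_E x y1 y2)
  ultimately show ?thesis by (rule LIMSEQ_unique)
qed


lemma norm_spec_int_le:
  assumes x: "x \<in> l2 I" and y: "y \<in> l2 I"
  shows "norm (spec_int E chi x y) \<le> B * (2 * (vnorm x)\<^sup>2 + 2 * (vnorm y)\<^sup>2)"
proof -
  define W where "W = B * (2 * (vnorm x)\<^sup>2 + 2 * (vnorm y)\<^sup>2)"
  have "norm (LINT t|spec_meas E (lincomb 1 x (\<i>^k) y). chi t) \<le> W" for k :: nat
  proof -
    have l2: "lincomb 1 x (\<i>^k) y \<in> l2 I" using x y by (rule l2_lincomb)
    have "norm (LINT t|spec_meas E (lincomb 1 x (\<i>^k) y). chi t) \<le> B * (vnorm (lincomb 1 x (\<i>^k) y))\<^sup>2"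
      unfolding spec_meas_eq
      by (rule distribution_function.norm_integral_le[OF distribution_function_spectral_cdf[OF l2] bounded])
    also have "\<dots> \<le> W" unfolding W_def
      using vnorm_lincomb_square_le[OF l2_imp_square_summable[OF x] l2_imp_square_summable[OF y], of 1 "\<i>^k"]
        order_trans[OF norm_ge_zero bounded]
      by (intro mult_left_mono) (auto simp: norm_power)
    finally show ?thesis .
  qed
  hence sum_le: "(\<Sum>k<4::nat. norm (\<i> ^ k * (LINT t|spec_meas E (lincomb 1 x (\<i>^k) y). chi t))) \<le> 4 * W"
    using sum_mono[of "{..<4::nat}" _ "\<lambda>_. W"] by (simp add: norm_mult norm_power)
  have "norm (spec_int E chi x y)
      = norm (\<Sum>k<4::nat. \<i> ^ k * (LINT t|spec_meas E (lincomb 1 x (\<i>^k) y). chi t)) / 4"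
    unfolding spec_int_def by (simp add: norm_divide)
  also have "\<dots> \<le> (\<Sum>k<4::nat. norm (\<i> ^ k * (LINT t|spec_meas E (lincomb 1 x (\<i>^k) y). chi t))) / 4"
    by (rule divide_right_mono[OF norm_sum]) simp
  also have "\<dots> \<le> 4 * W / 4"
    by (rule divide_right_mono[OF sum_le]) simp
  finally show ?thesis unfolding W_def by simp
qed

(* Rescaling y to unit length turns the quadratic bound of norm_spec_int_le into a linear one. *)
lemma norm_spec_int_le_vnorm:
  assumes x: "x \<in> l2 I" and y: "y \<in> l2 I"
  shows "norm (spec_int E chi x y) \<le> (B * (2 * (vnorm x)\<^sup>2 + 2)) * vnorm y"
proof (cases "vnorm y = 0")
  case True
  hence "y = lincomb 0 y 0 y"
    using vnorm_eq_zero[OF l2_imp_square_summable[OF y]] by (simp add: lincomb_def)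
  hence "spec_int E chi x y = 0"
    using spec_int_antilinear[OF x y y, of 0 0] by simp
  thus ?thesis using True by simp
next
  case False
  define r where "r = vnorm y"
  have r: "0 < r" using False vnorm_nonneg[OF l2_imp_square_summable[OF y]] unfolding r_def by simp
  define u where "u = lincomb (of_real (1/r)) y 0 y"
  have u: "u \<in> l2 I" unfolding u_def using y y by (rule l2_lincomb)
  have sy: "square_summable y" and su: "square_summable u"
    using y u by (auto intro: l2_imp_square_summable)
  have "ip u u = of_real (1/r) * cnj (of_real (1/r)) * ip y y"
    unfolding u_def
    using ip_lincomb_left[OF sy sy square_summable_lincomb[OF sy sy]] ip_lincomb_right[OF sy sy sy] by simp
  also have "\<dots> = 1" using ip_self[OF sy] r unfolding r_def by (simp add: power2_eq_square)
  finally have "(vnorm u)\<^sup>2 = 1" unfolding ip_self[OF su] by (simp only: of_real_eq_1_iff)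
  hence u1: "vnorm u = 1" using vnorm_nonneg[OF su] by (simp add: power2_eq_1_iff)
  have "y = lincomb (of_real r) u 0 u"
    unfolding u_def lincomb_def using r by (auto simp: fun_eq_iff)
  hence "norm (spec_int E chi x y) = r * norm (spec_int E chi x u)"
    using spec_int_antilinear[OF x u u, of "of_real r" 0] r by (simp add: norm_mult)
  also have "\<dots> \<le> r * (B * (2 * (vnorm x)\<^sup>2 + 2 * (vnorm u)\<^sup>2))"
    using norm_spec_int_le[OF x u] r by (intro mult_left_mono) auto
  finally show ?thesis unfolding u1 r_def by (simp add: mult.commute)
qed

lemma fcalc_l2_ip:
  assumes x: "x \<in> l2 I"
  shows "fcalc I E chi x \<in> l2 I \<and> (\<forall>y\<in>l2 I. ip (fcalc I E chi x) y = spec_int E chi x y)"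
proof -
  interpret L: bounded_antilinear_l2 I "spec_int E chi x" "B * (2 * (vnorm x)\<^sup>2 + 2)"
    by unfold_locales (use spec_int_antilinear[OF x] norm_spec_int_le_vnorm[OF x] in auto)
  have "fcalc I E chi x = L.representer"
    unfolding fcalc_def
    by (rule the_equality) (use L.representer_l2 L.ip_representer l2_eqI in metis)+
  thus ?thesis using L.representer_l2 L.ip_representer by simp
qed

lemma ip_E_fcalc:
  assumes f: "f \<in> l2 I" and g: "g \<in> l2 I"
  shows "ip (E \<mu> (fcalc I E chi f)) g = spec_int E chi f (E \<mu> g)"
  using fcalc_l2_ip[OF f] ip_E_left[of _ g \<mu>] g l2_E[OF g] by simp


lemma ip_E_fcalc_by_parts:
  assumes f: "f \<in> l2 I" and g: "g \<in> l2 I" and "a \<le> \<mu>"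
  shows "ip (E \<mu> (fcalc I E chi f)) g - ip (E a (fcalc I E chi f)) g
    = chi \<mu> * ip (E \<mu> f) g - chi a * ip (E a f) g - integral {a..\<mu>} (\<lambda>t. ip (E t f) g * chi' t)"
proof -
  define F where "F t = ip (E t f) g" for t
  define \<Phi> where "\<Phi> \<mu> = ip (E \<mu> (fcalc I E chi f)) g" for \<mu>
  \<comment> \<open>the part of parts_approx independent of the upper limit; its limit is the constant of integration\<close>
  define s where "s n = chi (- real n) * F (- real n) + integral {- real n..a} (\<lambda>t. F t * chi' t)" for n
  have s: "s \<longlonglongrightarrow> chi \<nu> * F \<nu> - integral {a..\<nu>} (\<lambda>t. F t * chi' t) - \<Phi> \<nu>" if "a \<le> \<nu>" for \<nu>
  proof -
    have "(\<lambda>n. parts_approx chi chi' n (\<lambda>t. F (min \<nu> t))) \<longlonglongrightarrow> \<Phi> \<nu>"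
      using tendsto_parts_approx_ip_E[OF f l2_E[OF g, of \<nu>]]
      by (simp add: F_def \<Phi>_def ip_E_E_min f g ip_E_fcalc)
    hence "(\<lambda>n. chi \<nu> * F \<nu> - integral {a..\<nu>} (\<lambda>t. F t * chi' t) - parts_approx chi chi' n (\<lambda>t. F (min \<nu> t)))
        \<longlonglongrightarrow> chi \<nu> * F \<nu> - integral {a..\<nu>} (\<lambda>t. F t * chi' t) - \<Phi> \<nu>"
      by (intro tendsto_intros)
    moreover have "\<forall>\<^sub>F n in sequentially.
        chi \<nu> * F \<nu> - integral {a..\<nu>} (\<lambda>t. F t * chi' t) - parts_approx chi chi' n (\<lambda>t. F (min \<nu> t)) = s n"
      using eventually_ge_at_top[of "nat \<lceil>\<bar>a\<bar> + \<bar>\<nu>\<bar>\<rceil>"]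
    proof eventually_elim
      case (elim n)
      hence "- real n \<le> a" "\<nu> \<le> real n" by linarith+
      thus ?case
        using parts_approx_min[OF has_derivative _ _ \<open>a \<le> \<nu>\<close>, of F n] integrable_ip_E_mult[OF f g]
        by (simp add: F_def s_def)
    qed
    ultimately show ?thesis by (rule Lim_transform_eventually)
  qed
  show ?thesis
    using LIMSEQ_unique[OF s[OF assms(3)] s[OF order_refl]] by (simp add: F_def \<Phi>_def algebra_simps)
qed

lemma has_vector_derivative_ip_E_fcalc:
  assumes f: "f \<in> l2 I" and g: "g \<in> l2 I"
    and dF: "((\<lambda>\<mu>. ip (E \<mu> f) g) has_vector_derivative dF) (at lam)"
  shows "((\<lambda>\<mu>. ip (E \<mu> (fcalc I E chi f)) g) has_vector_derivative chi lam * dF) (at lam)"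
proof -
  define a where "a = lam - 1"
  define F where "F t = ip (E t f) g" for t
  have int: "(\<lambda>t. F t * chi' t) integrable_on {a..lam + 1}"
    unfolding F_def by (rule integrable_ip_E_mult[OF f g])
  have dF': "(F has_vector_derivative dF) (at lam)"
    using dF unfolding F_def[abs_def] .
  have "isCont chi' lam"
    using continuous_derivative by (simp add: continuous_on_eq_continuous_at)
  hence cont: "isCont (\<lambda>t. F t * chi' t) lam"
    using has_vector_derivative_continuous[OF dF'] by (intro isCont_mult)
  have "((\<lambda>\<mu>. integral {a..\<mu>} (\<lambda>t. F t * chi' t)) has_vector_derivative F lam * chi' lam)
      (at lam within {a..lam + 1} - {})"
    by (rule integral_has_vector_derivative_continuous_at[OF int _ _ continuous_at_imp_continuous_within[OF cont]])
      (auto simp: a_def)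
  hence I: "((\<lambda>\<mu>. integral {a..\<mu>} (\<lambda>t. F t * chi' t)) has_vector_derivative F lam * chi' lam) (at lam)"
    using at_within_Icc_at[of a lam "lam + 1"] by (simp add: a_def)
  define \<Psi> where "\<Psi> \<mu> = ip (E a (fcalc I E chi f)) g + (chi \<mu> * F \<mu> - chi a * F a
      - integral {a..\<mu>} (\<lambda>t. F t * chi' t))" for \<mu>
  have "(\<Psi> has_vector_derivative 0 + (chi lam * dF + chi' lam * F lam - 0 - F lam * chi' lam)) (at lam)"
    unfolding \<Psi>_def
    by (intro has_vector_derivative_add has_vector_derivative_diff has_vector_derivative_mult
        has_vector_derivative_const has_derivative I dF')
  moreover have "0 + (chi lam * dF + chi' lam * F lam - 0 - F lam * chi' lam) = chi lam * dF"
    by (simp add: mult.commute)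
  ultimately have \<Psi>: "(\<Psi> has_vector_derivative chi lam * dF) (at lam)" by simp
  have \<Psi>_eq: "\<Psi> \<mu> = ip (E \<mu> (fcalc I E chi f)) g" if "\<mu> \<in> {a<..}" for \<mu>
  proof -
    have "a \<le> \<mu>" using that by simp
    from ip_E_fcalc_by_parts[OF f g this] show ?thesis
      unfolding \<Psi>_def F_def by (simp only: diff_eq_eq[of _ _ "_ - _"]) simp
  qed
  have "lam \<in> {a<..}" by (simp add: a_def)
  with \<Psi> show ?thesis
    by (rule has_vector_derivative_transform_within_open[OF _ open_greaterThan _ \<Psi>_eq])
qed

end

lemma C0_infty_imp_bounded_C1:
  assumes "C0_infty chi"
  obtains chi' B where "\<And>t. (chi has_vector_derivative chi' t) (at t)"
    and "continuous_on UNIV chi'" and "\<And>t. norm (chi t) \<le> B"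
proof -
  obtain d :: "nat \<Rightarrow> real \<Rightarrow> complex" where d0: "d 0 = chi"
    and dd: "\<And>k x. (d k has_vector_derivative d (Suc k) x) (at x)"
    and dl: "(d 0 \<longlongrightarrow> 0) at_infinity"
    using assms unfolding C0_infty_def by blast
  have der: "(chi has_vector_derivative d 1 t) (at t)" for t using dd[of 0 t] d0 by simp
  have "continuous_on UNIV (d 1)"
    by (rule continuous_at_imp_continuous_on) (metis One_nat_def dd has_vector_derivative_continuous)
  moreover have cont: "continuous_on UNIV chi"
    by (rule continuous_at_imp_continuous_on) (metis der has_vector_derivative_continuous)
  obtain R where R: "\<And>t. R \<le> norm t \<Longrightarrow> norm (chi t) < 1"
    using tendstoD[OF dl, of 1] d0 unfolding eventually_at_infinity by auto
  obtain K where K: "\<And>t. t \<in> cball 0 R \<Longrightarrow> norm (chi t) \<le> K"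
    using compact_imp_bounded[OF compact_continuous_image[OF continuous_on_subset[OF cont] compact_cball]]
    unfolding bounded_iff by blast
  have "norm (chi t) \<le> max 1 K" for t
    using R[of t] K[of t] by (cases "R \<le> norm t") auto
  ultimately show ?thesis using that der by blast
qed

theorem mainTheorem8:
  fixes I :: "nat set" and D :: "vec set" and H :: "vec \<Rightarrow> vec"
    and E :: "real \<Rightarrow> vec \<Rightarrow> vec" and f g :: vec and lam :: real
    and dF :: complex and chi :: "real \<Rightarrow> complex"
  assumes "selfadjoint I D H"
    and "spectral_family_of I D H E"
    and "f \<in> l2 I" and "g \<in> l2 I"
    and "((\<lambda>\<mu>. ip (E \<mu> f) g) has_vector_derivative dF) (at lam)"
    and "C0_infty chi"
  shows "((\<lambda>\<mu>. ip (E \<mu> (fcalc I E chi f)) g) has_vector_derivative (chi lam * dF)) (at lam)"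
proof -
  obtain chi' B where "\<And>t. (chi has_vector_derivative chi' t) (at t)"
    and "continuous_on UNIV chi'" and "\<And>t. norm (chi t) \<le> B"
    using C0_infty_imp_bounded_C1[OF assms(6)] by blast
  moreover have "spectral_family I E"
    using assms(2) unfolding spectral_family_of_def by blast
  ultimately interpret spectral_calculus I E chi chi' B
    by unfold_locales
  show ?thesis by (rule has_vector_derivative_ip_E_fcalc[OF assms(3-5)])
qed

end
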